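(* Suppose Assumptions (A1) and (A2) hold and $C>C^*$. Then $$\left|\min_{\mathscr{S}}\Big(\inf_{T\in\mathcal{T}^{1/2}_{\mathscr{S}}}\sup_{\tau\in\mathrm{Lip}_C(\mathbb{R}^d)}\mathcal{R}(T,\mathscr{S},\tau)\Big)-\frac{C}{2}\,\frac{1}{\#\mathcal{S}_P}\min_{\mathscr{S}}\sum_{s\in\mathcal{S}_P\setminus\mathscr{S}}\|X_s-X_{N_{\mathscr{S}}(s)}\|\right|\le B\,\sigma_E\,\frac{\min\{\#(\mathcal{S}_E\cap\mathcal{S}_P),k\}}{\#\mathcal{S}_P},$$ where both minima range over nonempty $\mathscr{S}\in\mathcal{A}(k)$.
   Context: Sites are indexed by $\mathcal{S}=\{1,\dots,S\}$. $\mathcal{S}_E\subseteq\mathcal{S}$ has $\mathrm{card}(\mathcal{S}_E)\ge2$, and $\mathcal{S}_P\subseteq\mathcal{S}$ is nonempty, with $\#\mathcal{S}_P=\mathrm{card}(\mathcal{S}_P)$. Each site $s$ has covariates $X_s\in\mathbb{R}^d$ and a known standard deviation $\sigma_s>0$. $\|\cdot\|$ is the Euclidean norm, and $\mathrm{Lip}_C(\mathbb{R}^d)$ is the set of $C$-Lipschitz functions $\mathbb{R}^d\to\mathbb{R}$ with respect to $\|\cdot\|$, where $C>0$. (A1): the true conditional treatment effect function $\tau$ lies in $\mathrm{Lip}_C(\mathbb{R}^d)$. (A2): the $X_s$ are pairwise distinct. Fix an integer $1\le k<\mathrm{card}(\mathcal{S}_E)$ and set $\mathcal{A}(k)=\{\mathscr{S}\subset\mathcal{S}_E:\mathrm{card}(\mathscr{S})\le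 k\}$. For a nonempty $\mathscr{S}$ with elements $\mathscr{S}_1<\dots<\mathscr{S}_m$, the data are $\hat\tau_{\mathscr{S}}\sim\mathcal{N}_m(\tau_{\mathscr{S}},\mathrm{diag}(\sigma^2_{\mathscr{S}_1},\dots,\sigma^2_{\mathscr{S}_m}))$, where $\tau_{\mathscr{S}}=(\tau(X_{\mathscr{S}_i}))_{i=1}^m$. A treatment rule is a measurable map $T:\mathbb{R}^m\to[0,1]^{\#\mathcal{S}_P}$. $\mathcal{T}^{1/2}_{\mathscr{S}}$ is the set of treatment rules with $\mathbb{E}[T_s(U)]=1/2$ for all $s\in\mathcal{S}_P$ whenever $U\sim\mathcal{N}_m(0,\Sigma)$, for every positive definite diagonal $\Sigma$. Regret is $\mathcal{R}(T,\mathscr{S},\tau)=\frac{1}{\#\mathcal{S}_P}\sum_{s\in\mathcal{S}_P}\tau(X_s)\big(\mathbf{1}\{\tau(X_s)\ge0\}-\mathbb{E}_{\tau_{\mathscr{S}}}[T_s(\hat\tau_{\mathscr{S}})]\big)$. $N_{\mathscr{S}}(s)$ is the nearest neighbor of $s$ in $\mathscr{S}$ in Euclidean distance of covariates, with the smallest index chosen under ties. $C^*=\max\{\sqrt{\pi/2}\,\sigma_{N_{\mathscr{S}}(s)}/\|X_s-X_{N_{\mathscr{S}}(s)}\|:\mathscr{S}\in\mathcal{A}(k)\text{ nonempty},\ s\in\mathcal{S}_P\setminus\mathscr{S}\}$. $\sigma_E=\max_{s\in\mathcal{S}_E}\sigma_s$. $B=\arg\max_{z\ge0}z\Phi(-z)$,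 where $\Phi$ is the standard normal CDF. *)

theory Defs
  imports "HOL-Probability.Probability"
begin

text \<open>Observations for a nonempty site set Sc are functions on Sc (the vector
  indexed by the elements of Sc in increasing order); their measurable space is
  the product of Lebesgue-Borel over Sc.\<close>

definition obs_space :: "nat set \<Rightarrow> (nat \<Rightarrow> real) measure" where
  "obs_space Sc = PiM Sc (\<lambda>_. lborel)"

definition gauss_law :: "nat set \<Rightarrow> (nat \<Rightarrow> real) \<Rightarrow> (nat \<Rightarrow> real) \<Rightarrow> (nat \<Rightarrow> real) measure" where
  "gauss_law Sc mu sd = PiM Sc (\<lambda>i. density lborel (normal_density (mu i) (sd i)))"

definition treatment_rules :: "nat set \<Rightarrow> nat set \<Rightarrow> (nat \<Rightarrow> (nat \<Rightarrow> real) \<Rightarrow> real) set" where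
  "treatment_rules SP Sc = {T. \<forall>s\<in>SP. T s \<in> borel_measurable (obs_space Sc) \<and>
       (\<forall>u\<in>space (obs_space Sc). 0 \<le> T s u \<and> T s u \<le> 1)}"

definition half_rules :: "nat set \<Rightarrow> nat set \<Rightarrow> (nat \<Rightarrow> (nat \<Rightarrow> real) \<Rightarrow> real) set" where
  "half_rules SP Sc = {T \<in> treatment_rules SP Sc. \<forall>sd. (\<forall>i\<in>Sc. sd i > 0) \<longrightarrow>
       (\<forall>s\<in>SP. integral\<^sup>L (gauss_law Sc (\<lambda>_. 0) sd) (T s) = 1/2)}"

definition regret :: "nat set \<Rightarrow> (nat \<Rightarrow> 'a::euclidean_space) \<Rightarrow> (nat \<Rightarrow> real)
     \<Rightarrow> (nat \<Rightarrow> (nat \<Rightarrow> real) \<Rightarrow> real) \<Rightarrow> nat set \<Rightarrow> ('a \<Rightarrow> real) \<Rightarrow> real" where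
  "regret SP X \<sigma> T Sc \<tau> = (1 / real (card SP)) *
     (\<Sum>s\<in>SP. \<tau> (X s) * ((if \<tau> (X s) \<ge> 0 then 1 else 0)
        - integral\<^sup>L (gauss_law Sc (\<lambda>i. \<tau> (X i)) \<sigma>) (T s)))"

text \<open>Worst-case regret over C-Lipschitz functions, minimised over T^{1/2}
  (extended reals, so that an unbounded supremum is +infinity).\<close>
definition minimax_regret :: "real \<Rightarrow> nat set \<Rightarrow> (nat \<Rightarrow> 'a::euclidean_space) \<Rightarrow> (nat \<Rightarrow> real)
     \<Rightarrow> nat set \<Rightarrow> ereal" where
  "minimax_regret C SP X \<sigma> Sc = (INF T\<in>half_rules SP Sc.
       SUP \<tau>\<in>{\<tau>. C-lipschitz_on UNIV \<tau>}. ereal (regret SP X \<sigma> T Sc \<tau>))"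

definition nn :: "(nat \<Rightarrow> 'a::euclidean_space) \<Rightarrow> nat set \<Rightarrow> nat \<Rightarrow> nat" where
  "nn X Sc s = Min {j\<in>Sc. \<forall>i\<in>Sc. norm (X s - X j) \<le> norm (X s - X i)}"

definition designs :: "nat set \<Rightarrow> nat \<Rightarrow> nat set set" where
  "designs SE k = {Sc. Sc \<subseteq> SE \<and> Sc \<noteq> {} \<and> card Sc \<le> k}"

definition C_star :: "nat set \<Rightarrow> nat set \<Rightarrow> nat \<Rightarrow> (nat \<Rightarrow> 'a::euclidean_space) \<Rightarrow> (nat \<Rightarrow> real) \<Rightarrow> real" where
  "C_star SE SP k X \<sigma> = Max {sqrt (pi/2) * \<sigma> (nn X Sc s) / norm (X s - X (nn X Sc s)) | Sc s.
       Sc \<in> designs SE k \<and> s \<in> SP - Sc}"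

definition Phi :: "real \<Rightarrow> real" where
  "Phi x = measure (density lborel std_normal_density) {..x}"

definition B_const :: real where
  "B_const = (THE z. z \<ge> 0 \<and> (\<forall>w\<ge>0. w * Phi (-w) \<le> z * Phi (-z)))"

end

theory Submission
  imports Defs
begin

text \<open>For a fixed design \<open>Sc\<close> the minimax regret is squeezed between two explicit
  quantities. Lower bound: the \<open>C\<close>-Lipschitz effect \<open>C \<cdot> dist(\<cdot>, X(Sc))\<close> vanishes on the
  design, so the observations are centred Gaussians and every rule in \<open>half_rules\<close> forecasts
  \<open>1/2\<close>, paying \<open>(C/2) \<parallel>X\<^sub>s - X\<^sub>N\<^sub>(\<^sub>s\<^sub>)\<parallel>\<close> at every unsampled policy site.
  Upper bound: threshold the estimate at sampled sites, which costs at most \<open>\<sigma> z \<Phi>(-z) \<le> \<sigma>\<^sub>E B\<close>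
  per site; at an unsampled site \<open>s\<close> forecast \<open>\<Phi>(\<tau>\<^sub>n / r)\<close> from the nearest sampled site \<open>n\<close>,
  with \<open>r\<close> chosen (possible exactly when \<open>C > C\<^sup>*\<close>) so that the expected forecast is
  \<open>\<Phi>(\<kappa> \<tau>(X\<^sub>n) / (C \<parallel>X\<^sub>s - X\<^sub>n\<parallel>))\<close>, \<open>\<kappa> = \<surd>(\<pi>/2)\<close>. As \<open>|\<tau>(X\<^sub>s) - \<tau>(X\<^sub>n)| \<le> C \<parallel>X\<^sub>s - X\<^sub>n\<parallel>\<close>,
  the elementary inequality \<open>(t + \<kappa>) \<Phi>(-t) \<le> \<kappa>/2\<close> bounds that regret by
  \<open>(C/2) \<parallel>X\<^sub>s - X\<^sub>n\<parallel>\<close> as well. The gap between the bounds is at most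
  \<open>B \<sigma>\<^sub>E min{#(S\<^sub>E \<inter> S\<^sub>P), k} / #S\<^sub>P\<close> uniformly in the design, so it survives minimisation.\<close>

lemma prob_space_std_normal: "prob_space (density lborel std_normal_density)"
  by (rule prob_space_normal_density) simp

lemma Phi_eq_nn_integral:
  "ennreal (Phi y) = (\<integral>\<^sup>+z. ennreal (std_normal_density z) * indicator {..y} z \<partial>lborel)"
proof -
  interpret prob_space "density lborel std_normal_density" by (rule prob_space_std_normal)
  have "ennreal (Phi y) = emeasure (density lborel std_normal_density) {..y}"
    unfolding Phi_def by (simp add: emeasure_eq_measure)
  then show ?thesis by (subst (asm) emeasure_density) auto
qed

lemma Phi_nonneg: "0 \<le> Phi x"
  unfolding Phi_def by simp

lemma Phi_le_1: "Phi x \<le> 1"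
proof -
  interpret prob_space "density lborel std_normal_density" by (rule prob_space_std_normal)
  show ?thesis unfolding Phi_def by simp
qed

lemma std_normal_density_minus: "std_normal_density (-x) = std_normal_density x"
  by (simp add: normal_density_def)

lemma std_normal_density_pos: "std_normal_density x > 0"
  by (simp add: normal_density_pos)

lemma std_normal_density_le: "std_normal_density x \<le> std_normal_density 0"
  unfolding std_normal_density_def by (simp add: divide_right_mono)

lemma continuous_on_std_normal_density: "continuous_on A std_normal_density"
  unfolding std_normal_density_def[abs_def] by (intro continuous_intros) auto

lemma std_normal_density_has_real_derivative:
  "(std_normal_density has_real_derivative (- x * std_normal_density x)) (at x)"
  unfolding std_normal_density_def[abs_def]
  by (auto intro!: derivative_eq_intros simp: power2_eq_square field_simps)

lemma nn_integral_normal_density_standardize: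
  assumes s: "s > 0" and g[measurable]: "g \<in> borel_measurable borel"
  shows "(\<integral>\<^sup>+x. ennreal (normal_density m s x) * g x \<partial>lborel)
       = (\<integral>\<^sup>+z. ennreal (std_normal_density z) * g (m + s * z) \<partial>lborel)"
proof -
  have "(\<integral>\<^sup>+x. ennreal (normal_density m s x) * g x \<partial>lborel)
     = ennreal s * (\<integral>\<^sup>+z. ennreal (normal_density m s (m + s * z)) * g (m + s * z) \<partial>lborel)"
    using nn_integral_real_affine[of "\<lambda>x. ennreal (normal_density m s x) * g x" s m] s by simp
  also have "\<dots> = (\<integral>\<^sup>+z. ennreal (s * normal_density m s (m + s * z)) * g (m + s * z) \<partial>lborel)"
    using s by (subst nn_integral_cmult[symmetric]) (auto simp: ennreal_mult mult.assoc)
  also have "(\<lambda>z. s * normal_density m s (m + s * z)) = std_normal_density"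
    using s by (auto simp: normal_density_def power_mult_distrib real_sqrt_mult field_simps)
  finally show ?thesis .
qed

lemma nn_integral_std_normal_reflect:
  assumes [measurable]: "g \<in> borel_measurable borel"
  shows "(\<integral>\<^sup>+z. ennreal (std_normal_density z) * g z \<partial>lborel)
       = (\<integral>\<^sup>+z. ennreal (std_normal_density z) * g (- z) \<partial>lborel)"
proof -
  have "(\<integral>\<^sup>+z. ennreal (std_normal_density z) * g z \<partial>lborel)
      = ennreal \<bar>-1\<bar> * (\<integral>\<^sup>+z. ennreal (std_normal_density (0 + -1 * z)) * g (0 + -1 * z) \<partial>lborel)"
    by (rule nn_integral_real_affine) auto
  then show ?thesis by (simp add: std_normal_density_minus)
qed

lemma nn_integral_normal_density_nonneg:
  assumes s: "s > 0"
  shows "(\<integral>\<^sup>+x. ennreal (normal_density m s x) * indicator {0..} x \<partial>lborel) = ennreal (Phi (m / s))"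
proof -
  have "(\<integral>\<^sup>+x. ennreal (normal_density m s x) * indicator {0..} x \<partial>lborel)
      = (\<integral>\<^sup>+z. ennreal (std_normal_density z) * indicator {0..} (m + s * z) \<partial>lborel)"
    using s by (rule nn_integral_normal_density_standardize) simp
  also have "\<dots> = (\<integral>\<^sup>+z. ennreal (std_normal_density z) * indicator {0..} (m + s * - z) \<partial>lborel)"
    by (rule nn_integral_std_normal_reflect) simp
  also have "\<dots> = (\<integral>\<^sup>+z. ennreal (std_normal_density z) * indicator {..m/s} z \<partial>lborel)"
    using s by (intro nn_integral_cong) (auto simp: indicator_def field_simps)
  finally show ?thesis by (simp add: Phi_eq_nn_integral)
qed

lemma Phi_minus: "Phi (-y) = 1 - Phi y"
proof -
  have "ennreal (Phi (-y)) = (\<integral>\<^sup>+z. ennreal (std_normal_density z) * indicator {..-y} (- z) \<partial>lborel)"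
    by (simp add: Phi_eq_nn_integral nn_integral_std_normal_reflect[of "indicator {..-y}"])
  also have "\<dots> = (\<integral>\<^sup>+z. ennreal (std_normal_density z) * indicator {y<..} z \<partial>lborel)"
  proof (rule nn_integral_cong_AE)
    show "AE z in lborel. ennreal (std_normal_density z) * indicator {..-y} (- z)
        = ennreal (std_normal_density z) * indicator {y<..} z"
      using AE_lborel_singleton[of y] by eventually_elim (auto simp: indicator_def)
  qed
  finally have "ennreal (Phi (-y)) + ennreal (Phi y)
      = (\<integral>\<^sup>+z. ennreal (std_normal_density z) * indicator {y<..} z
             + ennreal (std_normal_density z) * indicator {..y} z \<partial>lborel)"
    by (simp add: Phi_eq_nn_integral[of y] nn_integral_add)
  also have "\<dots> = emeasure (density lborel std_normal_density) UNIV"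
    by (auto simp: emeasure_density indicator_def intro!: nn_integral_cong)
  also have "\<dots> = 1"
    using prob_space.emeasure_space_1[OF prob_space_std_normal] by simp
  finally have "Phi (-y) + Phi y = 1"
    using Phi_nonneg by (simp add: ennreal_plus[symmetric] del: ennreal_plus)
  then show ?thesis by simp
qed

lemma Phi_0: "Phi 0 = 1/2"
  using Phi_minus[of 0] by simp

lemma Phi_eq_add_integral:
  assumes "a \<le> u"
  shows "Phi u = Phi a + integral {a..u} std_normal_density"
proof -
  have int: "(std_normal_density has_integral integral {a..u} std_normal_density) {a..u}"
    by (intro integrable_integral integrable_continuous_interval continuous_on_std_normal_density)
  have "ennreal (Phi u) = (\<integral>\<^sup>+z. ennreal (std_normal_density z) * indicator {..<a} z
      + ennreal (std_normal_density z) * indicator {a..u} z \<partial>lborel)"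
    unfolding Phi_eq_nn_integral using assms by (intro nn_integral_cong) (auto simp: indicator_def)
  also have "\<dots> = (\<integral>\<^sup>+z. ennreal (std_normal_density z) * indicator {..<a} z \<partial>lborel)
      + ennreal (integral {a..u} std_normal_density)"
    by (subst nn_integral_add) (auto simp: nn_integral_has_integral_lebesgue'[OF _ int])
  also have "(\<integral>\<^sup>+z. ennreal (std_normal_density z) * indicator {..<a} z \<partial>lborel) = ennreal (Phi a)"
    unfolding Phi_eq_nn_integral
    using AE_lborel_singleton[of a] by (intro nn_integral_cong_AE) (auto simp: indicator_def)
  finally show ?thesis
    using Phi_nonneg has_integral_nonneg[OF int] std_normal_density_pos
    by (simp add: ennreal_plus[symmetric] less_imp_le del: ennreal_plus)
qed

lemma Phi_has_real_derivative: "(Phi has_real_derivative std_normal_density x) (at x)"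
proof -
  let ?a = "x - 1" and ?b = "x + 1"
  have "((\<lambda>u. integral {?a..u} std_normal_density) has_vector_derivative std_normal_density x)
      (at x within {?a..?b})"
    by (rule integral_has_vector_derivative) (auto intro: continuous_on_std_normal_density)
  moreover have "at x within {?a..?b} = at x"
    by (rule at_within_interior) auto
  ultimately have "((\<lambda>u. Phi ?a + integral {?a..u} std_normal_density)
      has_real_derivative std_normal_density x) (at x)"
    by (auto simp: has_real_derivative_iff_has_vector_derivative intro!: derivative_eq_intros)
  then show ?thesis
    by (rule has_field_derivative_transform_within_open[where S="{?a<..<?b}"])
      (auto intro!: Phi_eq_add_integral[symmetric])
qed

lemma Phi_has_real_derivative_chain[derivative_intros]:
  "(g has_real_derivative g') (at x within s) \<Longrightarrow>
   ((\<lambda>x. Phi (g x)) has_real_derivative std_normal_density (g x) * g') (at x within s)"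
  by (rule DERIV_chain2[OF Phi_has_real_derivative])

lemma std_normal_density_has_real_derivative_chain[derivative_intros]:
  "(g has_real_derivative g') (at x within s) \<Longrightarrow>
   ((\<lambda>x. std_normal_density (g x)) has_real_derivative (- g x * std_normal_density (g x)) * g')
     (at x within s)"
  by (rule DERIV_chain2[OF std_normal_density_has_real_derivative])

lemma borel_measurable_Phi[measurable]: "Phi \<in> borel_measurable borel"
  using Phi_has_real_derivative
  by (intro borel_measurable_continuous_onI continuous_at_imp_continuous_on) (auto dest: DERIV_isCont)

lemma Phi_mono: "x \<le> y \<Longrightarrow> Phi x \<le> Phi y"
  using Phi_eq_add_integral[of x y]
    integral_nonneg[of std_normal_density "{x..y}"] std_normal_density_pos
  by (auto intro: integrable_continuous_interval continuous_on_std_normal_density less_imp_le)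

lemma Phi_at_bot: "(Phi \<longlongrightarrow> 0) at_bot"
proof -
  interpret real_distribution "density lborel std_normal_density"
    by (simp add: real_distribution_def real_distribution_axioms_def prob_space_std_normal)
  have "Phi = cdf (density lborel std_normal_density)"
    by (auto simp: Phi_def cdf_def)
  then show ?thesis using cdf_lim_at_bot by simp
qed

lemma Phi_minus_le_mills_ratio:
  assumes t: "t > 0"
  shows "Phi (-t) \<le> std_normal_density t / t"
proof -
  let ?G = "\<lambda>t. std_normal_density t / t - Phi (-t)"
  have "((\<lambda>t. std_normal_density t / t) \<longlongrightarrow> 0) at_top"
  proof (rule tendsto_sandwich[of "\<lambda>_. 0" _ _ "\<lambda>t. std_normal_density 0 / t"])
    show "eventually (\<lambda>t. 0 \<le> std_normal_density t / t) at_top"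
      "eventually (\<lambda>t. std_normal_density t / t \<le> std_normal_density 0 / t) at_top"
      using eventually_gt_at_top[of 0]
      by (eventually_elim, simp add: divide_right_mono std_normal_density_le)+
  qed (auto intro!: tendsto_divide_0[OF tendsto_const] filterlim_at_top_imp_at_infinity filterlim_ident)
  moreover have "((\<lambda>t. Phi (-t)) \<longlongrightarrow> 0) at_top"
    using filterlim_compose[OF Phi_at_bot filterlim_uminus_at_bot_at_top] by simp
  ultimately have lim: "(?G \<longlongrightarrow> 0) at_top"
    using tendsto_diff by fastforce
  have "0 < ?G t"
  proof (rule DERIV_neg_imp_decreasing_at_top[where flim=0 and f="?G" and b=t])
    fix x assume "x \<ge> t"
    then have x: "x > 0" using t by simp
    have "(?G has_real_derivative (- x * std_normal_density x * x - std_normal_density x) / (x * x)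
        + std_normal_density (-x)) (at x)"
      using x by (auto intro!: derivative_eq_intros)
    moreover have "(- x * std_normal_density x * x - std_normal_density x) / (x * x)
        + std_normal_density (-x) = - std_normal_density x / (x * x)"
      using x by (simp add: std_normal_density_minus field_simps)
    moreover have "- std_normal_density x / (x * x) < 0"
      using x std_normal_density_pos[of x] by simp
    ultimately show "\<exists>y. DERIV ?G x :> y \<and> y < 0" by metis
  qed (use lim in simp)
  then show ?thesis by simp
qed

definition kappa :: real where
  "kappa = sqrt (pi / 2)"

lemma kappa_pos: "kappa > 0"
  unfolding kappa_def by simp

lemma kappa_mult_std_normal_density_0: "kappa * std_normal_density 0 = 1/2"
proof -
  have "kappa * std_normal_density 0 = sqrt (pi / 2) / sqrt (2 * pi)"
    by (simp add: kappa_def std_normal_density_def)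
  also have "\<dots> = sqrt ((pi / 2) / (2 * pi))"
    by (simp only: real_sqrt_divide)
  also have "(pi / 2) / (2 * pi) = (1/2 :: real)\<^sup>2"
    by (simp add: power2_eq_square)
  finally show ?thesis by simp
qed

lemma Phi_minus_le_kappa_density:
  assumes t: "t \<ge> 0"
  shows "Phi (-t) \<le> (kappa + t) * std_normal_density t"
proof (cases "t * (kappa + t) \<ge> 1")
  case True
  then have "t > 0" using t kappa_pos by (cases "t = 0") auto
  then have "Phi (-t) \<le> std_normal_density t / t"
    by (rule Phi_minus_le_mills_ratio)
  also have "\<dots> \<le> (kappa + t) * std_normal_density t"
    using True \<open>t > 0\<close> std_normal_density_pos[of t]
    by (simp add: divide_le_eq mult_le_cancel_right1 mult_ac)
  finally show ?thesis .
next
  case False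
  let ?E = "\<lambda>t. (kappa + t) * std_normal_density t - Phi (-t)"
  have "?E 0 \<le> ?E t"
  proof (rule DERIV_nonneg_imp_nondecreasing[OF t])
    fix x assume x: "0 \<le> x" "x \<le> t"
    have "(?E has_real_derivative std_normal_density x * (2 - x * (kappa + x))) (at x)"
      by (auto intro!: derivative_eq_intros simp: std_normal_density_minus algebra_simps)
    moreover have "x * (kappa + x) \<le> t * (kappa + t)"
      using x kappa_pos by (intro mult_mono) auto
    then have "std_normal_density x * (2 - x * (kappa + x)) \<ge> 0"
      using False std_normal_density_pos[of x] by simp
    ultimately show "\<exists>y. DERIV ?E x :> y \<and> y \<ge> 0" by blast
  qed
  then show ?thesis
    using kappa_mult_std_normal_density_0 Phi_0 by simp
qed

lemma kappa_shift_Phi_minus_le_nonneg: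
  assumes t: "t \<ge> 0"
  shows "(t + kappa) * Phi (-t) \<le> kappa / 2"
proof -
  let ?D = "\<lambda>t. kappa * (Phi t - 1/2) - t * Phi (-t)"
  have "?D 0 \<le> ?D t"
  proof (rule DERIV_nonneg_imp_nondecreasing[OF t])
    fix x assume x: "0 \<le> x" "x \<le> t"
    have "(?D has_real_derivative (kappa + x) * std_normal_density x - Phi (-x)) (at x)"
      by (auto intro!: derivative_eq_intros simp: std_normal_density_minus algebra_simps)
    moreover have "(kappa + x) * std_normal_density x - Phi (-x) \<ge> 0"
      using Phi_minus_le_kappa_density[OF x(1)] by simp
    ultimately show "\<exists>y. DERIV ?D x :> y \<and> y \<ge> 0" by blast
  qed
  then have "0 \<le> kappa * (Phi t - 1/2) - t * Phi (-t)"
    using Phi_0 by simp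
  moreover have "Phi t = 1 - Phi (-t)"
    using Phi_minus[of t] by simp
  ultimately show ?thesis by (simp add: algebra_simps)
qed

lemma kappa_shift_Phi_le_nonneg:
  assumes u: "u \<ge> 0"
  shows "(kappa - u) * Phi u \<le> kappa / 2"
proof -
  let ?F = "\<lambda>u. kappa / 2 - (kappa - u) * Phi u"
  have "?F 0 \<le> ?F u"
  proof (rule DERIV_nonneg_imp_nondecreasing[OF u])
    fix x assume x: "0 \<le> x" "x \<le> u"
    have "(?F has_real_derivative Phi x - kappa * std_normal_density x + x * std_normal_density x) (at x)"
      by (auto intro!: derivative_eq_intros simp: algebra_simps)
    moreover have "Phi x \<ge> 1/2"
      using Phi_mono[OF x(1)] Phi_0 by simp
    moreover have "kappa * std_normal_density x \<le> 1/2"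
      using mult_left_mono[OF std_normal_density_le[of x], of kappa] kappa_pos
        kappa_mult_std_normal_density_0 by simp
    moreover have "x * std_normal_density x \<ge> 0"
      using x std_normal_density_pos[of x] by simp
    ultimately show "\<exists>y. DERIV ?F x :> y \<and> y \<ge> 0"
      by (metis add_nonneg_nonneg diff_ge_0_iff_ge order_trans)
  qed
  then show ?thesis using Phi_0 by simp
qed

text \<open>Sharp: equality holds at \<open>t = 0\<close>, as \<open>\<kappa> \<phi>(0) = 1/2\<close>.\<close>

lemma kappa_shift_Phi_minus_le:
  assumes "t \<ge> - kappa"
  shows "(t + kappa) * Phi (-t) \<le> kappa / 2"
proof (cases "t \<ge> 0")
  case True
  then show ?thesis by (rule kappa_shift_Phi_minus_le_nonneg)
next
  case False
  then show ?thesis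
    using kappa_shift_Phi_le_nonneg[of "-t"] by (simp add: algebra_simps)
qed

definition B_objective :: "real \<Rightarrow> real" where
  "B_objective z = z * Phi (-z)"

definition B_objective_deriv :: "real \<Rightarrow> real" where
  "B_objective_deriv z = Phi (-z) - z * std_normal_density z"

lemma B_objective_has_real_derivative:
  "(B_objective has_real_derivative B_objective_deriv x) (at x)"
  unfolding B_objective_def[abs_def] B_objective_deriv_def
  by (auto intro!: derivative_eq_intros simp: std_normal_density_minus)

lemma B_objective_deriv_has_real_derivative:
  "(B_objective_deriv has_real_derivative std_normal_density x * (x\<^sup>2 - 2)) (at x)"
  unfolding B_objective_deriv_def[abs_def]
  by (auto intro!: derivative_eq_intros
      simp: std_normal_density_minus power2_eq_square algebra_simps)

lemma continuous_on_B_objective: "continuous_on A B_objective"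
  using B_objective_has_real_derivative by (meson DERIV_isCont continuous_at_imp_continuous_on)

lemma B_objective_deriv_neg:
  assumes z: "z > 1"
  shows "B_objective_deriv z < 0"
proof -
  have "Phi (-z) \<le> std_normal_density z / z"
    using z by (intro Phi_minus_le_mills_ratio) simp
  also have "\<dots> < z * std_normal_density z"
    using z std_normal_density_pos[of z] less_1_mult[of z z]
    by (simp add: divide_less_eq mult_less_cancel_right1 mult_ac)
  finally show ?thesis unfolding B_objective_deriv_def by simp
qed

lemma B_objective_less_B_objective_1:
  assumes "z > 1"
  shows "B_objective z < B_objective 1"
proof (rule DERIV_neg_imp_decreasing_open[OF assms _ continuous_on_B_objective])
  fix x :: real assume "1 < x"
  then show "\<exists>y. DERIV B_objective x :> y \<and> y < 0"
    using B_objective_has_real_derivative B_objective_deriv_neg by blast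
qed

lemma B_objective_deriv_strict_antimono:
  assumes "0 \<le> a" "a < b" "b \<le> 1"
  shows "B_objective_deriv b < B_objective_deriv a"
proof (rule DERIV_neg_imp_decreasing[OF assms(2)])
  fix x assume "a \<le> x" "x \<le> b"
  then have "x\<^sup>2 \<le> 1" using assms by (simp add: power_le_one)
  then have "std_normal_density x * (x\<^sup>2 - 2) < 0"
    using std_normal_density_pos[of x] by (simp add: mult_pos_neg)
  then show "\<exists>d. DERIV B_objective_deriv x :> d \<and> d < 0"
    using B_objective_deriv_has_real_derivative by blast
qed

text \<open>Two maximisers \<open>z\<^sub>1 < z\<^sub>2\<close> would lie in \<open>[0, 1]\<close>; the mean value theorem on both halves
  of \<open>[z\<^sub>1, z\<^sub>2]\<close> then contradicts the strict decrease of the derivative there.\<close>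

lemma B_objective_max_unique:
  assumes z1: "z1 \<ge> 0" "\<And>w. w \<ge> 0 \<Longrightarrow> B_objective w \<le> B_objective z1"
    and z2: "\<And>w. w \<ge> 0 \<Longrightarrow> B_objective w \<le> B_objective z2"
    and lt: "z1 < z2"
  shows False
proof -
  let ?m = "(z1 + z2) / 2"
  have eq: "B_objective z1 = B_objective z2"
    using z1(2)[of z2] z2[of z1] z1(1) lt by simp
  have "z2 \<le> 1"
  proof (rule ccontr)
    assume "\<not> z2 \<le> 1"
    then have "B_objective z2 < B_objective 1"
      by (intro B_objective_less_B_objective_1) simp
    with z2[of 1] show False by simp
  qed
  obtain x1 where x1: "z1 < x1" "x1 < ?m"
    and "B_objective ?m - B_objective z1 = (?m - z1) * B_objective_deriv x1"
    using MVT2[of z1 ?m B_objective B_objective_deriv] lt B_objective_has_real_derivative by auto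
  moreover obtain x2 where x2: "?m < x2" "x2 < z2"
    and "B_objective z2 - B_objective ?m = (z2 - ?m) * B_objective_deriv x2"
    using MVT2[of ?m z2 B_objective B_objective_deriv] lt B_objective_has_real_derivative by auto
  moreover have "B_objective ?m \<le> B_objective z1"
    using z1 lt by auto
  ultimately have "(?m - z1) * B_objective_deriv x1 \<le> 0" "(z2 - ?m) * B_objective_deriv x2 \<ge> 0"
    using eq by simp_all
  then have "B_objective_deriv x1 \<le> 0" "B_objective_deriv x2 \<ge> 0"
    using lt by (simp_all add: mult_le_0_iff zero_le_mult_iff)
  moreover have "B_objective_deriv x2 < B_objective_deriv x1"
    using x1 x2 z1 \<open>z2 \<le> 1\<close> by (intro B_objective_deriv_strict_antimono) auto
  ultimately show False by simp
qed

lemma B_objective_max_exists: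
  obtains z where "z \<ge> 0" "\<And>w. w \<ge> 0 \<Longrightarrow> B_objective w \<le> B_objective z"
proof -
  obtain z where z: "z \<in> {0..1}" "\<And>y. y \<in> {0..1} \<Longrightarrow> B_objective y \<le> B_objective z"
    using continuous_attains_sup[of "{0..1}" B_objective] continuous_on_B_objective by auto
  have max: "B_objective w \<le> B_objective z" if "w \<ge> 0" for w
  proof (cases "w \<le> 1")
    case True
    with z(2) that show ?thesis by simp
  next
    case False
    then have "B_objective w < B_objective 1"
      by (intro B_objective_less_B_objective_1) simp
    with z(2)[of 1] show ?thesis by simp
  qed
  show thesis using z(1) max by (intro that) auto
qed

lemma B_const_is_max:
  "B_const \<ge> 0 \<and> (\<forall>w\<ge>0. B_objective w \<le> B_objective B_const)"
proof -
  obtain z where z: "z \<ge> 0" "\<And>w. w \<ge> 0 \<Longrightarrow> B_objective w \<le> B_objective z"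
    using B_objective_max_exists by blast
  have "\<exists>!z. z \<ge> 0 \<and> (\<forall>w\<ge>0. B_objective w \<le> B_objective z)"
  proof (rule ex1I[of _ z])
    fix z' assume z': "z' \<ge> 0 \<and> (\<forall>w\<ge>0. B_objective w \<le> B_objective z')"
    show "z' = z"
    proof (cases z z' rule: linorder_cases)
      case less
      with z z' show ?thesis using B_objective_max_unique[of z z'] by blast
    next
      case greater
      with z z' show ?thesis using B_objective_max_unique[of z' z] by blast
    qed simp
  qed (use z in blast)
  from theI'[OF this[unfolded B_objective_def]] show ?thesis
    unfolding B_const_def B_objective_def by simp
qed

lemma B_const_nonneg: "B_const \<ge> 0"
  using B_const_is_max by simp

lemma B_objective_le_B_const:
  assumes "w \<ge> 0"
  shows "w * Phi (-w) \<le> B_const"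
proof -
  have "w * Phi (-w) \<le> B_const * Phi (-B_const)"
    using B_const_is_max assms unfolding B_objective_def by simp
  also have "\<dots> \<le> B_const"
    using B_const_nonneg Phi_le_1 by (simp add: mult_left_le)
  finally show ?thesis .
qed

lemma borel_measurable_density_lborel:
  assumes "G \<in> borel_measurable borel"
  shows "G \<in> borel_measurable (density lborel g)"
  using assms measurable_cong_sets[of "density lborel g" lborel borel borel] by simp

lemma gauss_law_component_integral:
  assumes n: "n \<in> Sc" and sd: "\<forall>i\<in>Sc. sd i > 0"
    and G[measurable]: "G \<in> borel_measurable borel" and G_nonneg: "\<And>x. 0 \<le> G x"
  shows "integral\<^sup>L (gauss_law Sc mu sd) (\<lambda>u. G (u n))
       = enn2real (\<integral>\<^sup>+x. ennreal (normal_density (mu n) (sd n) x) * ennreal (G x) \<partial>lborel)"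
proof -
  let ?M = "\<lambda>i. density lborel (normal_density (mu i) (sd i))"
  have "integral\<^sup>L (gauss_law Sc mu sd) (\<lambda>u. G (u n))
      = integral\<^sup>L (distr (PiM Sc ?M) (?M n) (\<lambda>u. u n)) G"
    unfolding gauss_law_def
    by (rule integral_distr[symmetric, OF measurable_component_singleton[OF n]
          borel_measurable_density_lborel[OF G]])
  also have "distr (PiM Sc ?M) (?M n) (\<lambda>u. u n) = ?M n"
    using sd n by (intro distr_PiM_component prob_space_normal_density) auto
  also have "integral\<^sup>L (?M n) G = integral\<^sup>L lborel (\<lambda>x. normal_density (mu n) (sd n) x * G x)"
    by (subst integral_density) auto
  also have "\<dots> = enn2real (\<integral>\<^sup>+x. ennreal (normal_density (mu n) (sd n) x * G x) \<partial>lborel)"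
    by (rule integral_eq_nn_integral) (auto simp: G_nonneg)
  finally show ?thesis
    by (simp add: ennreal_mult G_nonneg)
qed

lemma gauss_law_sign_expectation:
  assumes "n \<in> Sc" and "\<forall>i\<in>Sc. sd i > 0"
  shows "integral\<^sup>L (gauss_law Sc mu sd) (\<lambda>u. if u n \<ge> 0 then 1 else 0) = Phi (mu n / sd n)"
proof -
  have "integral\<^sup>L (gauss_law Sc mu sd) (\<lambda>u. if u n \<ge> 0 then 1 else 0)
     = enn2real (\<integral>\<^sup>+x. ennreal (normal_density (mu n) (sd n) x) * ennreal (if x \<ge> 0 then 1 else 0) \<partial>lborel)"
    using assms by (intro gauss_law_component_integral[where G="\<lambda>x. if x \<ge> 0 then 1 else 0"]) auto
  also have "(\<lambda>x. ennreal (if x \<ge> 0 then 1 else 0)) = indicator {0..}"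
    by (auto simp: indicator_def)
  finally show ?thesis
    using assms Phi_nonneg by (simp add: nn_integral_normal_density_nonneg)
qed

lemma Phi_eq_nn_integral_normal_density:
  assumes r: "r > 0"
  shows "ennreal (Phi (x / r))
       = (\<integral>\<^sup>+y. ennreal (normal_density 0 r y) * (if y \<le> x then 1 else 0) \<partial>lborel)"
proof -
  have "(\<integral>\<^sup>+y. ennreal (normal_density 0 r y) * (if y \<le> x then 1 else 0) \<partial>lborel)
     = (\<integral>\<^sup>+z. ennreal (std_normal_density z) * (if 0 + r * z \<le> x then 1 else 0) \<partial>lborel)"
    using r by (rule nn_integral_normal_density_standardize) simp
  also have "\<dots> = (\<integral>\<^sup>+z. ennreal (std_normal_density z) * indicator {..x/r} z \<partial>lborel)"
    using r by (intro nn_integral_cong) (auto simp: indicator_def field_simps)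
  finally show ?thesis by (simp add: Phi_eq_nn_integral)
qed

lemma nn_integral_normal_density_convolution:
  assumes s: "s > 0" and r: "r > 0"
  shows "(\<integral>\<^sup>+y. ennreal (normal_density m s (y + w)) * ennreal (normal_density 0 r y) \<partial>lborel)
       = ennreal (normal_density m (sqrt (s\<^sup>2 + r\<^sup>2)) w)"
proof -
  have "(\<integral>\<^sup>+y. ennreal (normal_density m s (y + w)) * ennreal (normal_density 0 r y) \<partial>lborel)
     = (\<integral>\<^sup>+y. ennreal (normal_density m s (- y + w)) * ennreal (normal_density 0 r (- y)) \<partial>lborel)"
    using nn_integral_real_affine[of "\<lambda>y. ennreal (normal_density m s (y + w)) * ennreal (normal_density 0 r y)" "-1" 0]
    by simp
  also have "\<dots> = (\<integral>\<^sup>+y. ennreal (normal_density 0 s ((w - m) - y) * normal_density 0 r y) \<partial>lborel)"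
    by (intro nn_integral_cong) (simp add: normal_density_def ennreal_mult[symmetric] algebra_simps)
  also have "\<dots> = ennreal (normal_density 0 (sqrt (s\<^sup>2 + r\<^sup>2)) (w - m))"
    using conv_normal_density_zero_mean[OF s r] by (rule fun_cong)
  finally show ?thesis
    by (simp add: normal_density_def)
qed

lemma nn_integral_normal_density_Phi:
  assumes s: "s > 0" and r: "r > 0"
  shows "(\<integral>\<^sup>+x. ennreal (normal_density m s x) * ennreal (Phi (x / r)) \<partial>lborel)
       = ennreal (Phi (m / sqrt (s\<^sup>2 + r\<^sup>2)))"
proof -
  let ?N = "\<lambda>x y. ennreal (normal_density m s x) * (ennreal (normal_density 0 r y) * (if y \<le> x then 1 else 0))"
  have "(\<integral>\<^sup>+x. ennreal (normal_density m s x) * ennreal (Phi (x / r)) \<partial>lborel)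
      = (\<integral>\<^sup>+x. \<integral>\<^sup>+y. ?N x y \<partial>lborel \<partial>lborel)"
    by (intro nn_integral_cong) (simp add: Phi_eq_nn_integral_normal_density[OF r] nn_integral_cmult)
  also have "\<dots> = (\<integral>\<^sup>+y. \<integral>\<^sup>+x. ?N x y \<partial>lborel \<partial>lborel)"
    by (rule lborel_pair.Fubini'[symmetric]) (simp add: case_prod_unfold, measurable)
  also have "\<dots> = (\<integral>\<^sup>+y. \<integral>\<^sup>+w. ?N (y + w) y \<partial>lborel \<partial>lborel)"
  proof (rule nn_integral_cong)
    fix y :: real
    show "(\<integral>\<^sup>+x. ?N x y \<partial>lborel) = (\<integral>\<^sup>+w. ?N (y + w) y \<partial>lborel)"
      using nn_integral_real_affine[of "\<lambda>x. ?N x y" 1 y] by simp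
  qed
  also have "\<dots> = (\<integral>\<^sup>+w. \<integral>\<^sup>+y. ?N (y + w) y \<partial>lborel \<partial>lborel)"
    by (rule lborel_pair.Fubini'[symmetric]) (simp add: case_prod_unfold, measurable)
  also have "\<dots> = (\<integral>\<^sup>+w. ennreal (normal_density m (sqrt (s\<^sup>2 + r\<^sup>2)) w) * indicator {0..} w \<partial>lborel)"
  proof (rule nn_integral_cong)
    fix w :: real
    have "(\<integral>\<^sup>+y. ?N (y + w) y \<partial>lborel)
        = (\<integral>\<^sup>+y. ennreal (normal_density m s (y + w)) * ennreal (normal_density 0 r y) \<partial>lborel)
          * indicator {0..} w"
      by (subst nn_integral_multc[symmetric]) (auto simp: indicator_def intro!: nn_integral_cong)
    then show "(\<integral>\<^sup>+y. ?N (y + w) y \<partial>lborel)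
        = ennreal (normal_density m (sqrt (s\<^sup>2 + r\<^sup>2)) w) * indicator {0..} w"
      by (simp add: nn_integral_normal_density_convolution[OF s r])
  qed
  also have "\<dots> = ennreal (Phi (m / sqrt (s\<^sup>2 + r\<^sup>2)))"
    using s r by (intro nn_integral_normal_density_nonneg) (simp add: add_pos_pos)
  finally show ?thesis .
qed

lemma gauss_law_Phi_expectation:
  assumes "n \<in> Sc" and "\<forall>i\<in>Sc. sd i > 0" and "r > 0"
  shows "integral\<^sup>L (gauss_law Sc mu sd) (\<lambda>u. Phi (u n / r)) = Phi (mu n / sqrt ((sd n)\<^sup>2 + r\<^sup>2))"
proof -
  have "integral\<^sup>L (gauss_law Sc mu sd) (\<lambda>u. Phi (u n / r))
     = enn2real (\<integral>\<^sup>+x. ennreal (normal_density (mu n) (sd n) x) * ennreal (Phi (x / r)) \<partial>lborel)"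
    using assms by (intro gauss_law_component_integral[where G="\<lambda>x. Phi (x / r)"]) (auto simp: Phi_nonneg)
  then show ?thesis
    using assms Phi_nonneg by (simp add: nn_integral_normal_density_Phi)
qed

lemma sign_rule_regret_le:
  assumes s: "s > 0"
  shows "a * ((if a \<ge> 0 then 1 else 0) - Phi (a / s)) \<le> s * B_const"
proof (cases "a \<ge> 0")
  case True
  have "a * ((if a \<ge> 0 then 1 else 0) - Phi (a / s)) = s * ((a / s) * Phi (- (a / s)))"
    using True s Phi_minus[of "a / s"] by simp
  also have "\<dots> \<le> s * B_const"
    using True s by (intro mult_left_mono B_objective_le_B_const) auto
  finally show ?thesis .
next
  case False
  have "a * ((if a \<ge> 0 then 1 else 0) - Phi (a / s)) = s * ((- a / s) * Phi (- (- a / s)))"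
    using False s by simp
  also have "\<dots> \<le> s * B_const"
    using False s by (intro mult_left_mono B_objective_le_B_const) (auto intro: divide_nonpos_pos)
  finally show ?thesis .
qed

lemma nonneg_mult_Phi_minus_le:
  assumes c: "c > 0" and a: "0 \<le> a" "a \<le> m + c"
  shows "a * Phi (- (m / (c / kappa))) \<le> c / 2"
proof -
  define t where "t = m / (c / kappa)"
  have ck: "c / kappa > 0" using c kappa_pos by simp
  have mc: "m + c = (c / kappa) * (t + kappa)"
    using c kappa_pos unfolding t_def by (simp add: field_simps)
  then have "0 \<le> (c / kappa) * (t + kappa)"
    using a by linarith
  then have "t \<ge> - kappa"
    using ck mult_pos_neg[of "c / kappa" "t + kappa"] by linarith
  have "a * Phi (-t) \<le> ((c / kappa) * (t + kappa)) * Phi (-t)"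
    using a mc Phi_nonneg by (intro mult_right_mono) auto
  also have "\<dots> = (c / kappa) * ((t + kappa) * Phi (-t))"
    by simp
  also have "\<dots> \<le> (c / kappa) * (kappa / 2)"
    using ck kappa_shift_Phi_minus_le[OF \<open>t \<ge> - kappa\<close>] by (intro mult_left_mono) auto
  also have "\<dots> = c / 2"
    using kappa_pos by simp
  finally show ?thesis unfolding t_def .
qed

lemma smoothed_rule_regret_le:
  assumes c: "c > 0" and am: "\<bar>a - m\<bar> \<le> c"
  shows "a * ((if a \<ge> 0 then 1 else 0) - Phi (m / (c / kappa))) \<le> c / 2"
proof (cases "a \<ge> 0")
  case True
  then show ?thesis
    using nonneg_mult_Phi_minus_le[OF c True, of m] am Phi_minus[of "m / (c / kappa)"] by simp
next
  case False
  then show ?thesis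
    using nonneg_mult_Phi_minus_le[OF c, of "- a" "- m"] am by simp
qed

lemma
  fixes X :: "nat \<Rightarrow> 'a::euclidean_space"
  assumes "finite Sc" and "Sc \<noteq> {}"
  shows nn_in: "nn X Sc s \<in> Sc"
    and nn_le: "i \<in> Sc \<Longrightarrow> norm (X s - X (nn X Sc s)) \<le> norm (X s - X i)"
proof -
  let ?f = "\<lambda>j. norm (X s - X j)"
  let ?A = "{j\<in>Sc. \<forall>i\<in>Sc. ?f j \<le> ?f i}"
  have "Min (?f ` Sc) \<in> ?f ` Sc"
    using assms by (intro Min_in) auto
  then obtain j where "j \<in> Sc" "?f j = Min (?f ` Sc)"
    by auto
  then have "?A \<noteq> {}"
    using assms by auto
  then have "Min ?A \<in> ?A"
    using assms by (intro Min_in) auto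
  then show "nn X Sc s \<in> Sc" "i \<in> Sc \<Longrightarrow> ?f (nn X Sc s) \<le> ?f i"
    unfolding nn_def by auto
qed

lemma infdist_eq_norm_nn:
  fixes X :: "nat \<Rightarrow> 'a::euclidean_space"
  assumes "finite Sc" and "Sc \<noteq> {}"
  shows "infdist (X s) (X ` Sc) = norm (X s - X (nn X Sc s))"
proof (rule antisym)
  have "X (nn X Sc s) \<in> X ` Sc"
    by (rule imageI[OF nn_in[OF assms]])
  from infdist_le[OF this] show "infdist (X s) (X ` Sc) \<le> norm (X s - X (nn X Sc s))"
    by (simp add: dist_norm)
  show "norm (X s - X (nn X Sc s)) \<le> infdist (X s) (X ` Sc)"
    using assms nn_le[OF assms] by (auto simp: infdist_notempty dist_norm intro!: cINF_greatest)
qed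

lemma lipschitz_on_scaled_infdist:
  assumes "C \<ge> 0"
  shows "C-lipschitz_on UNIV (\<lambda>x. C * infdist x A)"
proof (rule lipschitz_onI)
  fix x y :: 'a
  have "dist (C * infdist x A) (C * infdist y A) = C * \<bar>infdist x A - infdist y A\<bar>"
    using assms by (simp add: dist_real_def abs_mult right_diff_distrib[symmetric])
  also have "\<dots> \<le> C * dist x y"
    using assms infdist_triangle_abs[of x A y] by (intro mult_left_mono) auto
  finally show "dist (C * infdist x A) (C * infdist y A) \<le> C * dist x y" .
qed (rule assms)

text \<open>The smoothing scale \<open>r\<close> gives \<open>\<sigma>\<^sub>n\<^sup>2 + r\<^sup>2 = (C \<parallel>X\<^sub>s - X\<^sub>n\<parallel> / \<kappa>)\<^sup>2\<close> for \<open>n = nn X Sc s\<close>, so the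
  forecast \<open>\<Phi>(u\<^sub>n / r)\<close> of \<open>nn_rule\<close> at \<open>s \<notin> Sc\<close> has mean \<open>\<Phi>(\<tau>(X\<^sub>n) / (C \<parallel>X\<^sub>s - X\<^sub>n\<parallel> / \<kappa>))\<close>,
  the situation of \<open>smoothed_rule_regret_le\<close>.\<close>

definition smoothing_sd :: "(nat \<Rightarrow> 'a::euclidean_space) \<Rightarrow> nat set \<Rightarrow> real \<Rightarrow> (nat \<Rightarrow> real) \<Rightarrow> nat \<Rightarrow> real"
  where "smoothing_sd X Sc C \<sigma> s =
    sqrt ((C * norm (X s - X (nn X Sc s)) / kappa)\<^sup>2 - (\<sigma> (nn X Sc s))\<^sup>2)"

definition nn_rule :: "(nat \<Rightarrow> 'a::euclidean_space) \<Rightarrow> nat set \<Rightarrow> real \<Rightarrow> (nat \<Rightarrow> real)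
    \<Rightarrow> nat \<Rightarrow> (nat \<Rightarrow> real) \<Rightarrow> real"
  where "nn_rule X Sc C \<sigma> s u =
    (if s \<in> Sc then (if u s \<ge> 0 then 1 else 0)
     else Phi (u (nn X Sc s) / smoothing_sd X Sc C \<sigma> s))"

lemma
  fixes X :: "nat \<Rightarrow> 'a::euclidean_space"
  assumes sig: "\<sigma> (nn X Sc s) > 0"
    and C: "kappa * \<sigma> (nn X Sc s) < C * norm (X s - X (nn X Sc s))"
  shows smoothing_sd_pos: "smoothing_sd X Sc C \<sigma> s > 0"
    and sqrt_add_smoothing_sd:
      "sqrt ((\<sigma> (nn X Sc s))\<^sup>2 + (smoothing_sd X Sc C \<sigma> s)\<^sup>2) = C * norm (X s - X (nn X Sc s)) / kappa"
proof -
  let ?c = "C * norm (X s - X (nn X Sc s)) / kappa"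
  have "\<sigma> (nn X Sc s) < ?c"
    using C kappa_pos by (simp add: less_divide_eq mult.commute)
  then have pos: "?c > 0" and "(\<sigma> (nn X Sc s))\<^sup>2 < ?c\<^sup>2"
    using sig by (auto intro: power_strict_mono)
  then show "smoothing_sd X Sc C \<sigma> s > 0"
    unfolding smoothing_sd_def by simp
  have "(\<sigma> (nn X Sc s))\<^sup>2 + (smoothing_sd X Sc C \<sigma> s)\<^sup>2 = ?c\<^sup>2"
    using \<open>(\<sigma> (nn X Sc s))\<^sup>2 < ?c\<^sup>2\<close> unfolding smoothing_sd_def by simp
  then show "sqrt ((\<sigma> (nn X Sc s))\<^sup>2 + (smoothing_sd X Sc C \<sigma> s)\<^sup>2) = ?c"
    using pos by (simp only: real_sqrt_abs abs_of_pos)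
qed

lemma gauss_law_nn_rule_in:
  assumes "s \<in> Sc" and "\<forall>i\<in>Sc. sd i > 0"
  shows "integral\<^sup>L (gauss_law Sc mu sd) (nn_rule X Sc C \<sigma> s) = Phi (mu s / sd s)"
  using gauss_law_sign_expectation[OF assms] assms(1) by (simp add: nn_rule_def[abs_def])

lemma gauss_law_nn_rule_out:
  fixes X :: "nat \<Rightarrow> 'a::euclidean_space"
  assumes "s \<notin> Sc" and "finite Sc" "Sc \<noteq> {}" and "\<forall>i\<in>Sc. sd i > 0"
    and "smoothing_sd X Sc C \<sigma> s > 0"
  shows "integral\<^sup>L (gauss_law Sc mu sd) (nn_rule X Sc C \<sigma> s)
       = Phi (mu (nn X Sc s) / sqrt ((sd (nn X Sc s))\<^sup>2 + (smoothing_sd X Sc C \<sigma> s)\<^sup>2))"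
  using gauss_law_Phi_expectation[OF nn_in[OF assms(2,3)] assms(4,5)] assms(1)
  by (simp add: nn_rule_def[abs_def])

lemma nn_rule_in_half_rules:
  fixes X :: "nat \<Rightarrow> 'a::euclidean_space"
  assumes fin: "finite Sc" and ne: "Sc \<noteq> {}"
    and r: "\<And>s. s \<in> SP \<Longrightarrow> s \<notin> Sc \<Longrightarrow> smoothing_sd X Sc C \<sigma> s > 0"
  shows "nn_rule X Sc C \<sigma> \<in> half_rules SP Sc"
  unfolding half_rules_def treatment_rules_def
proof (intro CollectI conjI ballI allI impI)
  fix s assume "s \<in> SP"
  have "nn X Sc s \<in> Sc"
    using nn_in[OF fin ne] .
  then show "nn_rule X Sc C \<sigma> s \<in> borel_measurable (obs_space Sc)"
    unfolding nn_rule_def[abs_def] obs_space_def by (cases "s \<in> Sc") simp_all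
  fix u
  show "0 \<le> nn_rule X Sc C \<sigma> s u" "nn_rule X Sc C \<sigma> s u \<le> 1"
    unfolding nn_rule_def by (auto simp: Phi_nonneg Phi_le_1)
next
  fix sd :: "nat \<Rightarrow> real" and s assume sd: "\<forall>i\<in>Sc. sd i > 0" and s: "s \<in> SP"
  show "integral\<^sup>L (gauss_law Sc (\<lambda>_. 0) sd) (nn_rule X Sc C \<sigma> s) = 1/2"
    using gauss_law_nn_rule_in[OF _ sd, where mu="\<lambda>_. 0"]
      gauss_law_nn_rule_out[OF _ fin ne sd r[OF s], where mu="\<lambda>_. 0"] Phi_0
    by (cases "s \<in> Sc") auto
qed

lemma nn_rule_regret_le_sampled:
  assumes "s \<in> Sc" "\<forall>i\<in>Sc. \<sigma> i > 0" "\<sigma> s \<le> sE"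
  shows "\<tau> (X s) * ((if \<tau> (X s) \<ge> 0 then 1 else 0)
      - integral\<^sup>L (gauss_law Sc (\<lambda>i. \<tau> (X i)) \<sigma>) (nn_rule X Sc C \<sigma> s)) \<le> B_const * sE"
proof -
  have "\<tau> (X s) * ((if \<tau> (X s) \<ge> 0 then 1 else 0)
      - integral\<^sup>L (gauss_law Sc (\<lambda>i. \<tau> (X i)) \<sigma>) (nn_rule X Sc C \<sigma> s)) \<le> \<sigma> s * B_const"
    using assms sign_rule_regret_le[of "\<sigma> s" "\<tau> (X s)"] by (simp add: gauss_law_nn_rule_in)
  also have "\<dots> \<le> B_const * sE"
    using assms B_const_nonneg by (simp add: mult.commute mult_left_mono)
  finally show ?thesis .
qed

lemma nn_rule_regret_le_unsampled:
  fixes X :: "nat \<Rightarrow> 'a::euclidean_space"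
  assumes fin: "finite Sc" and ne: "Sc \<noteq> {}" and sig: "\<forall>i\<in>Sc. \<sigma> i > 0" and "s \<notin> Sc"
    and C: "kappa * \<sigma> (nn X Sc s) < C * norm (X s - X (nn X Sc s))"
    and lip: "C-lipschitz_on UNIV \<tau>"
  shows "\<tau> (X s) * ((if \<tau> (X s) \<ge> 0 then 1 else 0)
      - integral\<^sup>L (gauss_law Sc (\<lambda>i. \<tau> (X i)) \<sigma>) (nn_rule X Sc C \<sigma> s))
    \<le> C / 2 * norm (X s - X (nn X Sc s))"
proof -
  let ?d = "norm (X s - X (nn X Sc s))"
  have "\<sigma> (nn X Sc s) > 0"
    using sig nn_in[OF fin ne] by blast
  then have "C * ?d > 0" and r: "smoothing_sd X Sc C \<sigma> s > 0"
    and "sqrt ((\<sigma> (nn X Sc s))\<^sup>2 + (smoothing_sd X Sc C \<sigma> s)\<^sup>2) = C * ?d / kappa"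
    using C smoothing_sd_pos sqrt_add_smoothing_sd kappa_pos
    by (auto intro: less_trans[OF mult_pos_pos])
  moreover have "\<bar>\<tau> (X s) - \<tau> (X (nn X Sc s))\<bar> \<le> C * ?d"
    using lipschitz_onD[OF lip] by (simp add: dist_real_def dist_norm)
  ultimately show ?thesis
    using \<open>s \<notin> Sc\<close> smoothed_rule_regret_le[of "C * ?d" "\<tau> (X s)" "\<tau> (X (nn X Sc s))"]
    by (simp add: gauss_law_nn_rule_out[OF _ fin ne sig r])
qed

lemma regret_nn_rule_le:
  fixes X :: "nat \<Rightarrow> 'a::euclidean_space"
  assumes fin: "finite Sc" and ne: "Sc \<noteq> {}" and sig: "\<forall>i\<in>Sc. \<sigma> i > 0" and "finite SP"
    and C: "\<forall>s\<in>SP - Sc. kappa * \<sigma> (nn X Sc s) < C * norm (X s - X (nn X Sc s))"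
    and sE: "\<forall>i\<in>Sc. \<sigma> i \<le> sE" and lip: "C-lipschitz_on UNIV \<tau>"
  shows "regret SP X \<sigma> (nn_rule X Sc C \<sigma>) Sc \<tau>
     \<le> C / 2 * (1 / real (card SP)) * (\<Sum>s\<in>SP - Sc. norm (X s - X (nn X Sc s)))
       + B_const * sE * real (card (SP \<inter> Sc)) / real (card SP)"
proof -
  let ?d = "\<lambda>s. norm (X s - X (nn X Sc s))"
  let ?term = "\<lambda>s. \<tau> (X s) * ((if \<tau> (X s) \<ge> 0 then 1 else 0)
      - integral\<^sup>L (gauss_law Sc (\<lambda>i. \<tau> (X i)) \<sigma>) (nn_rule X Sc C \<sigma> s))"
  have sampled: "?term s \<le> B_const * sE" if "s \<in> SP \<inter> Sc" for s
    using that sE by (intro nn_rule_regret_le_sampled[OF _ sig]) auto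
  have unsampled: "?term s \<le> C / 2 * ?d s" if "s \<in> SP - Sc" for s
    using that C by (intro nn_rule_regret_le_unsampled[OF fin ne sig _ _ lip]) auto
  have "(\<Sum>s\<in>SP. ?term s) = (\<Sum>s\<in>SP \<inter> Sc. ?term s) + (\<Sum>s\<in>SP - Sc. ?term s)"
    by (rule sum.Int_Diff) fact
  also have "\<dots> \<le> (\<Sum>s\<in>SP \<inter> Sc. B_const * sE) + (\<Sum>s\<in>SP - Sc. C / 2 * ?d s)"
    using sampled unsampled by (intro add_mono sum_mono) auto
  finally have "(\<Sum>s\<in>SP. ?term s)
      \<le> C / 2 * (\<Sum>s\<in>SP - Sc. ?d s) + B_const * sE * real (card (SP \<inter> Sc))"
    by (simp add: sum_distrib_left mult.commute)
  then have "regret SP X \<sigma> (nn_rule X Sc C \<sigma>) Sc \<tau>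
      \<le> (1 / real (card SP)) * (C / 2 * (\<Sum>s\<in>SP - Sc. ?d s) + B_const * sE * real (card (SP \<inter> Sc)))"
    unfolding regret_def by (rule mult_left_mono) simp
  then show ?thesis
    by (simp add: algebra_simps)
qed

text \<open>The effect \<open>C \<cdot> dist(\<cdot>, X(Sc))\<close> vanishes on the design, so the observations are
  centred and every rule in \<open>half_rules\<close> forecasts \<open>1/2\<close> on average.\<close>

lemma regret_infdist_eq:
  fixes X :: "nat \<Rightarrow> 'a::euclidean_space"
  assumes fin: "finite Sc" and ne: "Sc \<noteq> {}" and sig: "\<forall>i\<in>Sc. \<sigma> i > 0" and "finite SP"
    and T: "T \<in> half_rules SP Sc" and C: "C \<ge> 0"
  shows "regret SP X \<sigma> T Sc (\<lambda>x. C * infdist x (X ` Sc))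
     = C / 2 * (1 / real (card SP)) * (\<Sum>s\<in>SP - Sc. norm (X s - X (nn X Sc s)))"
proof -
  let ?\<tau> = "\<lambda>x. C * infdist x (X ` Sc)"
  let ?term = "\<lambda>s. ?\<tau> (X s) * ((if ?\<tau> (X s) \<ge> 0 then 1 else 0)
      - integral\<^sup>L (gauss_law Sc (\<lambda>i. ?\<tau> (X i)) \<sigma>) (T s))"
  have "gauss_law Sc (\<lambda>i. ?\<tau> (X i)) \<sigma> = gauss_law Sc (\<lambda>_. 0) \<sigma>"
    unfolding gauss_law_def by (intro PiM_cong) auto
  then have "?term s = (if s \<in> Sc then 0 else C / 2 * norm (X s - X (nn X Sc s)))" if "s \<in> SP" for s
    using T that sig C infdist_eq_norm_nn[OF fin ne, of X s] unfolding half_rules_def by auto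
  then have "(\<Sum>s\<in>SP. ?term s) = (\<Sum>s\<in>SP - Sc. C / 2 * norm (X s - X (nn X Sc s)))"
    using \<open>finite SP\<close> by (simp add: sum.If_cases Diff_eq)
  then show ?thesis
    unfolding regret_def by (simp add: sum_distrib_left mult_ac)
qed

lemma minimax_regret_le:
  fixes X :: "nat \<Rightarrow> 'a::euclidean_space"
  assumes "finite Sc" "Sc \<noteq> {}" "\<forall>i\<in>Sc. \<sigma> i > 0" "finite SP"
    and "\<forall>s\<in>SP - Sc. kappa * \<sigma> (nn X Sc s) < C * norm (X s - X (nn X Sc s))"
    and sE: "\<forall>i\<in>Sc. \<sigma> i \<le> sE" and m: "card (SP \<inter> Sc) \<le> m"
  shows "minimax_regret C SP X \<sigma> Sc
     \<le> ereal (C / 2 * (1 / real (card SP)) * (\<Sum>s\<in>SP - Sc. norm (X s - X (nn X Sc s)))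
       + B_const * sE * real m / real (card SP))"
  unfolding minimax_regret_def
proof (rule INF_lower2)
  show "nn_rule X Sc C \<sigma> \<in> half_rules SP Sc"
    using assms(1-3,5) nn_in[OF assms(1,2)] by (intro nn_rule_in_half_rules smoothing_sd_pos) auto
  have "sE \<ge> 0"
    using assms(2,3) sE by (meson all_not_in_conv less_le_trans less_imp_le)
  then have "B_const * sE * real (card (SP \<inter> Sc)) / real (card SP) \<le> B_const * sE * real m / real (card SP)"
    using m B_const_nonneg by (simp add: divide_right_mono mult_left_mono)
  then show "(SUP \<tau>\<in>{\<tau>. C-lipschitz_on UNIV \<tau>}. ereal (regret SP X \<sigma> (nn_rule X Sc C \<sigma>) Sc \<tau>))
      \<le> ereal (C / 2 * (1 / real (card SP)) * (\<Sum>s\<in>SP - Sc. norm (X s - X (nn X Sc s)))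
        + B_const * sE * real m / real (card SP))"
    using regret_nn_rule_le[OF assms(1-6)] by (intro SUP_least) fastforce
qed

lemma minimax_regret_ge:
  fixes X :: "nat \<Rightarrow> 'a::euclidean_space"
  assumes "finite Sc" "Sc \<noteq> {}" "\<forall>i\<in>Sc. \<sigma> i > 0" "finite SP" and C: "C \<ge> 0"
  shows "ereal (C / 2 * (1 / real (card SP)) * (\<Sum>s\<in>SP - Sc. norm (X s - X (nn X Sc s))))
     \<le> minimax_regret C SP X \<sigma> Sc"
  unfolding minimax_regret_def
proof (rule INF_greatest)
  fix T assume "T \<in> half_rules SP Sc"
  then show "ereal (C / 2 * (1 / real (card SP)) * (\<Sum>s\<in>SP - Sc. norm (X s - X (nn X Sc s))))
      \<le> (SUP \<tau>\<in>{\<tau>. C-lipschitz_on UNIV \<tau>}. ereal (regret SP X \<sigma> T Sc \<tau>))"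
    using regret_infdist_eq[OF assms(1-4) _ C, of T X] lipschitz_on_scaled_infdist[OF C, of "X ` Sc"]
    by (intro SUP_upper2[of "\<lambda>x. C * infdist x (X ` Sc)"]) auto
qed

lemma Min_ereal_sandwich:
  fixes f :: "'a \<Rightarrow> ereal" and g :: "'a \<Rightarrow> real"
  assumes "finite D" "D \<noteq> {}" "c \<ge> 0"
    and lower: "\<And>x. x \<in> D \<Longrightarrow> ereal (c * g x) \<le> f x"
    and upper: "\<And>x. x \<in> D \<Longrightarrow> f x \<le> ereal (c * g x + b)"
  shows "\<bar>Min (f ` D) - ereal (c * Min (g ` D))\<bar> \<le> ereal b"
proof -
  have "Min (g ` D) \<in> g ` D"
    using assms(1,2) by (intro Min_in) auto
  then obtain x0 where x0: "x0 \<in> D" "g x0 = Min (g ` D)"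
    by auto
  have "ereal (c * Min (g ` D)) \<le> Min (f ` D)"
  proof (rule Min.boundedI)
    fix y assume "y \<in> f ` D"
    then obtain x where "x \<in> D" "y = f x" by blast
    then have "c * Min (g ` D) \<le> c * g x"
      using assms(1,3) by (intro mult_left_mono Min_le) auto
    with lower[OF \<open>x \<in> D\<close>] show "ereal (c * Min (g ` D)) \<le> y"
      using \<open>y = f x\<close> by (meson ereal_less_eq(3) order.trans)
  qed (use assms in auto)
  moreover have "Min (f ` D) \<le> ereal (c * Min (g ` D) + b)"
    using Min_le[OF finite_imageI[OF assms(1)] imageI[OF x0(1)], of f] upper[OF x0(1)] x0(2)
    by simp
  ultimately show ?thesis
    by (cases "Min (f ` D)") auto
qed

lemma designsD:
  assumes "Sc \<in> designs SE k" "finite SE"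
  shows "finite Sc" "Sc \<noteq> {}" "Sc \<subseteq> SE" "card Sc \<le> k"
  using assms finite_subset unfolding designs_def by auto

lemma finite_designs: "finite SE \<Longrightarrow> finite (designs SE k)"
  unfolding designs_def by (rule finite_subset[of _ "Pow SE"]) auto

lemma singleton_in_designs: "e \<in> SE \<Longrightarrow> 1 \<le> k \<Longrightarrow> {e} \<in> designs SE k"
  unfolding designs_def by auto

lemma card_Int_design_le:
  assumes "Sc \<in> designs SE k" "finite SE"
  shows "card (SP \<inter> Sc) \<le> min (card (SE \<inter> SP)) k"
  using designsD[OF assms] assms(2) card_mono[of "SE \<inter> SP" "SP \<inter> Sc"] card_mono[of Sc "SP \<inter> Sc"]
  by auto

lemma C_star_ge:
  assumes "finite SE" "finite SP" and "Sc \<in> designs SE k" "s \<in> SP - Sc"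
  shows "sqrt (pi / 2) * \<sigma> (nn X Sc s) / norm (X s - X (nn X Sc s)) \<le> C_star SE SP k X \<sigma>"
proof -
  let ?h = "\<lambda>Sc s. sqrt (pi / 2) * \<sigma> (nn X Sc s) / norm (X s - X (nn X Sc s))"
  let ?H = "{?h Sc s | Sc s. Sc \<in> designs SE k \<and> s \<in> SP - Sc}"
  have "?H \<subseteq> (\<lambda>(Sc, s). ?h Sc s) ` (designs SE k \<times> SP)"
    by auto
  then have "finite ?H"
    by (rule finite_subset) (simp add: assms(1,2) finite_designs)
  moreover have "?h Sc s \<in> ?H"
    using assms(3,4) by blast
  ultimately show ?thesis
    unfolding C_star_def by (rule Max_ge)
qed

lemma norm_nn_pos:
  fixes X :: "nat \<Rightarrow> 'a::euclidean_space"
  assumes "inj_on X U" "Sc \<subseteq> U" "s \<in> U" "s \<notin> Sc" "finite Sc" "Sc \<noteq> {}"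
  shows "norm (X s - X (nn X Sc s)) > 0"
  using assms nn_in[OF assms(5,6), of X s] inj_onD[OF assms(1), of s "nn X Sc s"] by auto

text \<open>The hypothesis \<open>C > C\<^sup>*\<close> says exactly that every smoothing scale is well defined.\<close>

lemma kappa_sigma_less_of_C_star_less:
  fixes X :: "nat \<Rightarrow> 'a::euclidean_space"
  assumes "SE \<subseteq> {1..S}" "SP \<subseteq> {1..S}" "inj_on X {1..S}"
    and "C > C_star SE SP k X \<sigma>" and "Sc \<in> designs SE k" "s \<in> SP - Sc"
  shows "kappa * \<sigma> (nn X Sc s) < C * norm (X s - X (nn X Sc s))"
proof -
  have fin: "finite SE" "finite SP"
    using assms(1,2) by (auto intro: finite_subset)
  then have "norm (X s - X (nn X Sc s)) > 0"
    using assms designsD[OF assms(5)] by (intro norm_nn_pos[of X "{1..S}"]) auto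
  moreover have "kappa * \<sigma> (nn X Sc s) / norm (X s - X (nn X Sc s)) < C"
    using C_star_ge[OF fin assms(5,6), of \<sigma> X] assms(4) unfolding kappa_def by linarith
  ultimately show ?thesis
    by (simp add: divide_less_eq mult.commute)
qed

lemma pos_of_C_star_less:
  fixes X :: "nat \<Rightarrow> 'a::euclidean_space"
  assumes "SE \<subseteq> {1..S}" "SP \<subseteq> {1..S}" "inj_on X {1..S}" "\<forall>s\<in>{1..S}. \<sigma> s > 0"
    and "C > C_star SE SP k X \<sigma>" and "Sc \<in> designs SE k" "s \<in> SP - Sc"
  shows "C > 0"
proof -
  have "finite SE"
    using assms(1) by (rule finite_subset) simp
  then have "\<sigma> (nn X Sc s) > 0"
    using assms(1,4) designsD[OF assms(6)] nn_in[of Sc X s] by auto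
  then have "0 < C * norm (X s - X (nn X Sc s))"
    using kappa_sigma_less_of_C_star_less[OF assms(1-3,5-7)] kappa_pos
    by (smt (verit) mult_pos_pos)
  then show ?thesis
    by (simp add: zero_less_mult_iff)
qed

theorem mainTheorem5:
  fixes S k :: nat and SE SP :: "nat set" and X :: "nat \<Rightarrow> 'a::euclidean_space"
    and \<sigma> :: "nat \<Rightarrow> real" and C :: real
  assumes SE_sub: "SE \<subseteq> {1..S}" and SE_card: "card SE \<ge> 2"
    and SP_sub: "SP \<subseteq> {1..S}" and SP_ne: "SP \<noteq> {}"
    and sigma_pos: "\<forall>s\<in>{1..S}. \<sigma> s > 0"
    and A2: "inj_on X {1..S}"
    and k_ge: "1 \<le> k" and k_lt: "k < card SE"
    and C_gt: "C > C_star SE SP k X \<sigma>"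
  shows "\<bar>Min ((\<lambda>Sc. minimax_regret C SP X \<sigma> Sc) ` designs SE k)
           - ereal (C / 2 * (1 / real (card SP)) *
               Min ((\<lambda>Sc. \<Sum>s\<in>SP - Sc. norm (X s - X (nn X Sc s))) ` designs SE k))\<bar>
         \<le> ereal (B_const * Max (\<sigma> ` SE) * real (min (card (SE \<inter> SP)) k) / real (card SP))"
proof (rule Min_ereal_sandwich)
  have fin: "finite SE" "finite SP"
    using SE_sub SP_sub by (auto intro: finite_subset)
  obtain e p where "e \<in> SE" "p \<in> SP" "e \<noteq> p"
    using SP_ne SE_card fin(1) by (metis card_le_Suc0_iff_eq ex_in_conv not_less_eq_eq numeral_2_eq_2)
  moreover have "{e} \<in> designs SE k"
    using \<open>e \<in> SE\<close> k_ge by (rule singleton_in_designs)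
  ultimately have "C > 0"
    using pos_of_C_star_less[OF SE_sub SP_sub A2 sigma_pos C_gt, of "{e}" p] by blast
  then show "finite (designs SE k)" "designs SE k \<noteq> {}" "C / 2 * (1 / real (card SP)) \<ge> 0"
    using finite_designs[OF fin(1)] \<open>{e} \<in> designs SE k\<close> by auto
  fix Sc assume Sc: "Sc \<in> designs SE k"
  have design: "finite Sc" "Sc \<noteq> {}" "\<forall>i\<in>Sc. \<sigma> i > 0" "\<forall>i\<in>Sc. \<sigma> i \<le> Max (\<sigma> ` SE)"
    using designsD[OF Sc fin(1)] fin(1) SE_sub sigma_pos by auto
  show "ereal (C / 2 * (1 / real (card SP)) * (\<Sum>s\<in>SP - Sc. norm (X s - X (nn X Sc s))))
      \<le> minimax_regret C SP X \<sigma> Sc"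
    using design fin \<open>C > 0\<close> by (intro minimax_regret_ge) auto
  show "minimax_regret C SP X \<sigma> Sc
      \<le> ereal (C / 2 * (1 / real (card SP)) * (\<Sum>s\<in>SP - Sc. norm (X s - X (nn X Sc s)))
        + B_const * Max (\<sigma> ` SE) * real (min (card (SE \<inter> SP)) k) / real (card SP))"
    using design fin(2) kappa_sigma_less_of_C_star_less[OF SE_sub SP_sub A2 C_gt Sc]
      card_Int_design_le[OF Sc fin(1)]
    by (intro minimax_regret_le) auto
qed

end
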